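(* Let $r>1$ and let $k,\ell,m$ be positive integers. Choose $x_0$ uniformly at random from the vertex set of the $(k,\ell,m)$-superstar and run the Moran process with fitness $r$ on it with initial mutant $x_0$. Then the extinction probability is at least $k/(2r(m+k))$.
   Context: Moran process: given a directed graph $G$ and fitness $r$, one vertex $x_0$ is a mutant, the rest non-mutants. At each step a vertex $v$ is chosen with probability proportional to fitness (mutants $r$, non-mutants $1$), an out-neighbour $w$ of $v$ is chosen uniformly at random and the state of $v$ is copied to $w$. Extinction: eventually no vertex is a mutant. The $(k,\ell,m)$-superstar has vertex set the disjoint union of reservoirs $R_1,\dots,R_\ell$ of size $m$, vertices $v_{i,j}$ ($i\in[\ell]$, $j\in[k]$), and a centre $v^*$; its edges are, for each $i\in[\ell]$: from $v^*$ to every vertex of $R_i$, from every vertex of $R_i$ to $v_{i,1}$, from $v_{i,j}$ to $v_{i,j+1}$ for $j\in[k-1]$, and from $v_{i,k}$ to $v^*$. *)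

theory Defs
  imports Complex_Main
begin

text \<open>A directed graph is given by a finite vertex set V and an out-neighbour
function out. A state of the Moran process is the set S of mutant vertices.\<close>

definition fitness :: "real \<Rightarrow> 'a set \<Rightarrow> 'a \<Rightarrow> real" where
  "fitness r S v = (if v \<in> S then r else 1)"

definition total_fitness :: "'a set \<Rightarrow> real \<Rightarrow> 'a set \<Rightarrow> real" where
  "total_fitness V r S = (\<Sum>v\<in>V. fitness r S v)"

definition moran_update :: "'a set \<Rightarrow> 'a \<Rightarrow> 'a \<Rightarrow> 'a set" where
  "moran_update S v w = (if v \<in> S then insert w S else S - {w})"

text \<open>extinct_by V out r n S: probability that, starting from mutant set S,
  after n steps of the Moran process there are no mutants (law of total
  probability over the first step: v chosen with probability proportional to
  fitness, w uniform among the out-neighbours of v).\<close>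
fun extinct_by :: "'a set \<Rightarrow> ('a \<Rightarrow> 'a set) \<Rightarrow> real \<Rightarrow> nat \<Rightarrow> 'a set \<Rightarrow> real" where
  "extinct_by V out r 0 S = (if S = {} then 1 else 0)"
| "extinct_by V out r (Suc n) S =
     (\<Sum>v\<in>V. \<Sum>w\<in>out v.
        (fitness r S v / total_fitness V r S) * (1 / real (card (out v)))
          * extinct_by V out r n (moran_update S v w))"

text \<open>Since the empty state is absorbing, the events "no mutant at time n" are
  increasing in n; the probability of eventual extinction is their supremum.\<close>
definition extinction_prob :: "'a set \<Rightarrow> ('a \<Rightarrow> 'a set) \<Rightarrow> real \<Rightarrow> 'a set \<Rightarrow> real" where
  "extinction_prob V out r S = (SUP n. extinct_by V out r n S)"

datatype svert = Res nat nat | Path nat nat | Centre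
  \<comment> \<open>Res i j: j-th vertex of reservoir R_i; Path i j: v_{i,j}; Centre: v^*\<close>

definition superstar_V :: "nat \<Rightarrow> nat \<Rightarrow> nat \<Rightarrow> svert set" where
  "superstar_V k l m =
     {Res i j | i j. i \<in> {1..l} \<and> j \<in> {1..m}} \<union>
     {Path i j | i j. i \<in> {1..l} \<and> j \<in> {1..k}} \<union> {Centre}"

fun superstar_out :: "nat \<Rightarrow> nat \<Rightarrow> nat \<Rightarrow> svert \<Rightarrow> svert set" where
  "superstar_out k l m Centre = {Res i j | i j. i \<in> {1..l} \<and> j \<in> {1..m}}"
| "superstar_out k l m (Res i j) = {Path i 1}"
| "superstar_out k l m (Path i j) = (if j < k then {Path i (j + 1)} else {Centre})"

end

theory Submission
  imports Defs
begin

text \<open>If the only out-neighbour of some vertex u \<noteq> x is x, then from the single mutant x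
  each step kills the mutant with probability at least 1/W (when u reproduces), where
  W = r + |V| - 1 is the total fitness, and every other non-mutant reproducing either leaves
  the state {x} or empties it. Hence p_{n+1} \<ge> 1/W + (|V| - 2)/W \<cdot> p_n, whose fixed point is 1/(1 + r).
  In the superstar the centre and all l k path vertices have such a predecessor, and
  (l k + 1)/((1 + r)(l m + l k + 1)) \<ge> k/(2 r (m + k)) since 1 + r \<le> 2 r.\<close>

lemma total_fitness_singleton:
  assumes "finite V" "x \<in> V"
  shows "total_fitness V r {x} = r + (real (card V) - 1)"
proof -
  have "total_fitness V r {x} = fitness r {x} x + (\<Sum>v\<in>V - {x}. fitness r {x} v)"
    unfolding total_fitness_def using assms by (simp add: sum.remove)
  also have "(\<Sum>v\<in>V - {x}. fitness r {x} v) = (\<Sum>v\<in>V - {x}. 1)"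
    by (rule sum.cong) (auto simp: fitness_def)
  also have "\<dots> = real (card V) - 1"
  proof -
    have "card V > 0" using assms card_gt_0_iff by blast
    then show ?thesis using assms by (simp add: card_Diff_singleton of_nat_diff)
  qed
  finally show ?thesis by (simp add: fitness_def)
qed

lemma le_SUP_of_geometric_lower_bound:
  fixes f :: "nat \<Rightarrow> real"
  assumes "\<And>n. f n \<le> 1" "\<And>n. q * (1 - c ^ n) \<le> f n" "0 \<le> c" "c < 1"
  shows "q \<le> (SUP n. f n)"
proof -
  have lim: "(\<lambda>n. q * (1 - c ^ n)) \<longlonglongrightarrow> q * (1 - 0)"
    using assms by (intro tendsto_intros LIMSEQ_power_zero) auto
  have bdd: "bdd_above (range f)" using assms(1) by (intro bdd_aboveI2) auto
  have "q * (1 - c ^ n) \<le> (SUP n. f n)" for n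
    using assms(2)[of n] cSUP_upper[OF UNIV_I bdd, of n] by linarith
  then show ?thesis using LIMSEQ_le_const2[OF lim] by auto
qed

locale moran_graph =
  fixes V :: "'a set" and out :: "'a \<Rightarrow> 'a set" and r :: real
  assumes finite_V: "finite V" and V_nonempty: "V \<noteq> {}" and r_pos: "r > 0"
    and finite_out: "v \<in> V \<Longrightarrow> finite (out v)"
    and out_nonempty: "v \<in> V \<Longrightarrow> out v \<noteq> {}"
begin

lemma fitness_pos [simp]: "fitness r S v > 0"
  using r_pos by (simp add: fitness_def)

lemma fitness_nonneg [simp]: "fitness r S v \<ge> 0"
  using fitness_pos[of S v] by linarith

lemma total_fitness_pos: "total_fitness V r S > 0"
  unfolding total_fitness_def by (rule sum_pos[OF finite_V V_nonempty fitness_pos])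

lemma sum_fitness_div_total: "(\<Sum>v\<in>V. fitness r S v / total_fitness V r S) = 1"
  using total_fitness_pos[of S] by (simp add: total_fitness_def flip: sum_divide_distrib)

lemma card_out_pos: "v \<in> V \<Longrightarrow> card (out v) > 0"
  using finite_out out_nonempty by (simp add: card_gt_0_iff)

lemma sum_uniform_out: "v \<in> V \<Longrightarrow> (\<Sum>w\<in>out v. c * (1 / real (card (out v)))) = c"
  using card_out_pos by simp

lemma extinct_by_bounds: "0 \<le> extinct_by V out r n S \<and> extinct_by V out r n S \<le> 1"
proof (induction n arbitrary: S)
  case 0
  then show ?case by simp
next
  case (Suc n)
  define W where "W = total_fitness V r S"
  have W_pos: "W > 0" using total_fitness_pos W_def by simp
  have term_nonneg: "0 \<le> fitness r S v / W * (1 / real (card (out v)))" for v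
    using W_pos by simp
  have "0 \<le> extinct_by V out r (Suc n) S"
    unfolding extinct_by.simps W_def[symmetric]
    by (intro sum_nonneg mult_nonneg_nonneg term_nonneg conjunct1[OF Suc])
  moreover have "extinct_by V out r (Suc n) S
      \<le> (\<Sum>v\<in>V. \<Sum>w\<in>out v. (fitness r S v / W) * (1 / real (card (out v))))"
    unfolding extinct_by.simps W_def[symmetric]
    by (intro sum_mono mult_left_le term_nonneg conjunct2[OF Suc])
  moreover have "\<dots> = (\<Sum>v\<in>V. fitness r S v / W)"
    by (rule sum.cong[OF refl], rule sum_uniform_out)
  moreover have "\<dots> = 1" using sum_fitness_div_total by (simp add: W_def)
  ultimately show ?case by linarith
qed

lemma extinct_by_empty: "extinct_by V out r n {} = 1"
proof (induction n)
  case 0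
  then show ?case by simp
next
  case (Suc n)
  have upd: "moran_update {} v w = {}" for v w by (simp add: moran_update_def)
  have "extinct_by V out r (Suc n) {} = (\<Sum>v\<in>V. \<Sum>w\<in>out v.
      (fitness r {} v / total_fitness V r {}) * (1 / real (card (out v))))"
    by (simp only: extinct_by.simps upd Suc mult_1_right)
  also have "\<dots> = (\<Sum>v\<in>V. fitness r {} v / total_fitness V r {})"
    by (rule sum.cong[OF refl], rule sum_uniform_out)
  finally show ?case using sum_fitness_div_total by simp
qed

lemma extinction_prob_nonneg: "extinction_prob V out r S \<ge> 0"
proof -
  have "bdd_above (range (\<lambda>n. extinct_by V out r n S))"
    using extinct_by_bounds by (intro bdd_aboveI2) auto
  then have "extinct_by V out r 0 S \<le> extinction_prob V out r S"
    unfolding extinction_prob_def by (rule cSUP_upper[OF UNIV_I])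
  then show ?thesis using extinct_by_bounds[of 0 S] by linarith
qed

text \<open>The contribution of a non-mutant reproducer v: it either leaves the state {x}
  unchanged or kills the mutant.\<close>
lemma step_term_nonmutant_ge:
  assumes "v \<in> V" "v \<noteq> x" "W > 0"
  shows "(\<Sum>w\<in>out v. (fitness r {x} v / W) * (1 / real (card (out v)))
            * extinct_by V out r n (moran_update {x} v w))
         \<ge> extinct_by V out r n {x} / W"
proof -
  let ?p = "extinct_by V out r n {x}" and ?c = "fitness r {x} v / W * (1 / real (card (out v)))"
  have update_ge: "?p \<le> extinct_by V out r n (moran_update {x} v w)" for w
  proof (cases "w = x")
    case True
    then have "moran_update {x} v w = {}" using assms by (simp add: moran_update_def)
    then show ?thesis using extinct_by_bounds[of n "{x}"] by (simp add: extinct_by_empty)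
  next
    case False
    then have "moran_update {x} v w = {x}" using assms by (auto simp: moran_update_def)
    then show ?thesis by simp
  qed
  have "?p / W = (\<Sum>w\<in>out v. ?c) * ?p"
    using assms card_out_pos[OF assms(1)] by (simp add: fitness_def)
  also have "\<dots> = (\<Sum>w\<in>out v. ?c * ?p)" by (rule sum_distrib_right)
  also have "\<dots> \<le> (\<Sum>w\<in>out v. ?c * extinct_by V out r n (moran_update {x} v w))"
    using assms by (intro sum_mono mult_left_mono update_ge) simp
  finally show ?thesis .
qed

lemma extinct_by_Suc_singleton_ge:
  assumes x: "x \<in> V" and u: "u \<in> V" "u \<noteq> x" "out u = {x}"
  defines "W \<equiv> r + (real (card V) - 1)"
  shows "extinct_by V out r (Suc n) {x}
           \<ge> 1 / W + (real (card V) - 2) / W * extinct_by V out r n {x}"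
proof -
  let ?p = "extinct_by V out r n {x}"
  define h where "h v = (\<Sum>w\<in>out v. (fitness r {x} v / W) * (1 / real (card (out v)))
          * extinct_by V out r n (moran_update {x} v w))" for v
  have W_eq: "total_fitness V r {x} = W"
    using total_fitness_singleton[OF finite_V x] W_def by simp
  have W_pos: "W > 0" using total_fitness_pos W_eq by metis
  have "extinct_by V out r (Suc n) {x} = (\<Sum>v\<in>V. h v)"
    by (simp only: extinct_by.simps W_eq h_def)
  also have "\<dots> = h x + h u + (\<Sum>v\<in>V - {x} - {u}. h v)"
    using finite_V x u by (simp add: sum.remove)
  finally have split: "extinct_by V out r (Suc n) {x} = h x + h u + (\<Sum>v\<in>V - {x} - {u}. h v)" .
  have "h x \<ge> 0"
    unfolding h_def using W_pos extinct_by_bounds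
    by (intro sum_nonneg mult_nonneg_nonneg) auto
  moreover have "h u = 1 / W"
    unfolding h_def using u by (simp add: fitness_def moran_update_def extinct_by_empty)
  moreover have "(\<Sum>v\<in>V - {x} - {u}. h v) \<ge> (\<Sum>v\<in>V - {x} - {u}. ?p / W)"
    unfolding h_def using W_pos by (intro sum_mono step_term_nonmutant_ge) auto
  moreover have "(\<Sum>v\<in>V - {x} - {u}. ?p / W) = (real (card V) - 2) / W * ?p"
  proof -
    have "card {x, u} \<le> card V" using finite_V x u by (intro card_mono) auto
    then have "card (V - {x} - {u}) = card V - 2"
      using finite_V x u by (simp add: card_Diff_subset)
    then show ?thesis using \<open>card {x, u} \<le> card V\<close> u by (simp add: of_nat_diff)
  qed
  ultimately show ?thesis using split by linarith
qed

lemma extinction_prob_singleton_ge: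
  assumes x: "x \<in> V" and u: "u \<in> V" "u \<noteq> x" "out u = {x}"
  shows "extinction_prob V out r {x} \<ge> 1 / (1 + r)"
proof -
  define W where "W = r + (real (card V) - 1)"
  define c where "c = (real (card V) - 2) / W"
  have "card {x, u} \<le> card V" using finite_V x u by (intro card_mono) auto
  then have card_ge_2: "real (card V) \<ge> 2" using u by simp
  then have W_pos: "W > 0" using r_pos by (simp add: W_def)
  have c_nonneg: "c \<ge> 0" using card_ge_2 W_pos by (simp add: c_def)
  have c_less_1: "c < 1" using W_pos r_pos by (simp add: c_def W_def)
  have one_minus_c: "1 / (1 + r) * (1 - c) = 1 / W"
    using W_pos r_pos by (simp add: c_def W_def field_simps)
  have lower: "1 / (1 + r) * (1 - c ^ n) \<le> extinct_by V out r n {x}" for n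
  proof (induction n)
    case 0
    then show ?case by simp
  next
    case (Suc n)
    have "q * (1 - c ^ Suc n) = q * (1 - c) + c * (q * (1 - c ^ n))" for q :: real
      by (simp add: algebra_simps)
    then have "1 / (1 + r) * (1 - c ^ Suc n) = 1 / W + c * (1 / (1 + r) * (1 - c ^ n))"
      by (simp only: one_minus_c)
    also have "\<dots> \<le> 1 / W + c * extinct_by V out r n {x}"
      using mult_left_mono[OF Suc c_nonneg] by simp
    also have "\<dots> \<le> extinct_by V out r (Suc n) {x}"
      using extinct_by_Suc_singleton_ge[OF x u, of n] by (simp add: W_def c_def)
    finally show ?case .
  qed
  show ?thesis
    unfolding extinction_prob_def
    by (rule le_SUP_of_geometric_lower_bound[OF _ lower c_nonneg c_less_1])
      (use extinct_by_bounds in blast)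
qed

end

definition superstar_reservoirs :: "nat \<Rightarrow> nat \<Rightarrow> svert set" where
  "superstar_reservoirs l m = (\<lambda>(i, j). Res i j) ` ({1..l} \<times> {1..m})"

definition superstar_paths :: "nat \<Rightarrow> nat \<Rightarrow> svert set" where
  "superstar_paths k l = (\<lambda>(i, j). Path i j) ` ({1..l} \<times> {1..k})"

lemma superstar_V_eq:
  "superstar_V k l m = superstar_reservoirs l m \<union> superstar_paths k l \<union> {Centre}"
  unfolding superstar_V_def superstar_reservoirs_def superstar_paths_def by auto

lemma card_superstar_reservoirs: "card (superstar_reservoirs l m) = l * m"
  unfolding superstar_reservoirs_def by (subst card_image) (auto simp: inj_on_def)

lemma card_superstar_paths: "card (superstar_paths k l) = l * k"
  unfolding superstar_paths_def by (subst card_image) (auto simp: inj_on_def)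

lemma finite_superstar_reservoirs [simp]: "finite (superstar_reservoirs l m)"
  by (simp add: superstar_reservoirs_def)

lemma Centre_notin_superstar_reservoirs [simp]: "Centre \<notin> superstar_reservoirs l m"
  by (auto simp: superstar_reservoirs_def)

lemma superstar_reservoirs_paths_disjoint: "superstar_reservoirs l m \<inter> superstar_paths k l = {}"
  by (auto simp: superstar_reservoirs_def superstar_paths_def)

lemma finite_superstar_paths [simp]: "finite (superstar_paths k l)"
  by (simp add: superstar_paths_def)

lemma Centre_notin_superstar_paths [simp]: "Centre \<notin> superstar_paths k l"
  by (auto simp: superstar_paths_def)

lemma card_superstar_V: "card (superstar_V k l m) = l * m + l * k + 1"
  unfolding superstar_V_eq
  by (simp add: card_Un_disjoint superstar_reservoirs_paths_disjoint
      card_superstar_reservoirs card_superstar_paths)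

lemma superstar_out_Centre: "superstar_out k l m Centre = superstar_reservoirs l m"
  by (auto simp: superstar_reservoirs_def)

lemma moran_graph_superstar:
  assumes "l > 0" "m > 0" "r > 0"
  shows "moran_graph (superstar_V k l m) (superstar_out k l m) r"
proof
  show "superstar_out k l m v \<noteq> {}" for v
  proof (cases v)
    case Centre
    have "Res 1 1 \<in> superstar_out k l m Centre" using assms by simp
    then show ?thesis using Centre by blast
  qed simp_all
  show "finite (superstar_out k l m v)" for v
  proof (cases v)
    case Centre
    then show ?thesis by (simp only: superstar_out_Centre finite_superstar_reservoirs)
  qed simp_all
qed (simp_all add: superstar_V_eq assms)

lemma superstar_forced_predecessor:
  assumes "k > 0" "l > 0" "m > 0" "x \<in> superstar_paths k l \<union> {Centre}"
  obtains u where "u \<in> superstar_V k l m" "u \<noteq> x" "superstar_out k l m u = {x}"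
proof (cases x)
  case Centre
  then show ?thesis using assms that[of "Path 1 k"] by (simp add: superstar_V_def)
next
  case (Path i j)
  then have ij: "i \<in> {1..l}" "j \<in> {1..k}"
    using assms(4) by (auto simp: superstar_paths_def)
  show ?thesis
  proof (cases "j = 1")
    case True
    then show ?thesis using Path ij assms that[of "Res i 1"] by (auto simp: superstar_V_def)
  next
    case False
    then have "j - 1 < k" "j - 1 + 1 = j" using ij by auto
    then show ?thesis
      using Path ij False by (intro that[of "Path i (j - 1)"]) (auto simp: superstar_V_def)
  qed
qed (use assms in \<open>auto simp: superstar_paths_def\<close>)

lemma superstar_bound_arith:
  fixes r :: real and k l m :: nat
  assumes "r > 1" "k > 0"
  shows "real k / (2 * r * (real m + real k))
           \<le> (real l * real k + 1) / ((1 + r) * (real l * real m + real l * real k + 1))"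
proof -
  have "real k * (real l * real m + real l * real k + 1) \<le> (real l * real k + 1) * (real m + real k)"
    by (simp add: algebra_simps)
  then have "(1 + r) * (real k * (real l * real m + real l * real k + 1))
      \<le> (2 * r) * ((real l * real k + 1) * (real m + real k))"
    using assms by (intro mult_mono[of "1 + r" "2 * r"]) auto
  then have "real k * ((1 + r) * (real l * real m + real l * real k + 1))
      \<le> (real l * real k + 1) * (2 * r * (real m + real k))"
    by (simp add: algebra_simps)
  moreover have "0 < 2 * r * (real m + real k)" "0 < (1 + r) * (real l * real m + real l * real k + 1)"
    using assms by (simp, intro mult_pos_pos) (auto intro: add_nonneg_pos)
  ultimately show ?thesis by (simp add: divide_simps)
qed

theorem lemma4p2:
  fixes r :: real and k l m :: nat
  assumes "r > 1" and "k > 0" and "l > 0" and "m > 0"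
  shows "(\<Sum>x\<in>superstar_V k l m.
            extinction_prob (superstar_V k l m) (superstar_out k l m) r {x})
           / real (card (superstar_V k l m))
         \<ge> real k / (2 * r * (real m + real k))"
proof -
  let ?V = "superstar_V k l m" and ?P = "superstar_paths k l \<union> {Centre}"
  let ?ep = "\<lambda>x. extinction_prob ?V (superstar_out k l m) r {x}"
  let ?N = "real l * real m + real l * real k + 1"
  interpret moran_graph ?V "superstar_out k l m" r
    using assms by (intro moran_graph_superstar) auto
  have P_sub_V: "?P \<subseteq> ?V" by (auto simp: superstar_V_eq)
  have ep_P: "1 / (1 + r) \<le> ?ep x" if x_P: "x \<in> ?P" for x
  proof -
    obtain u where "u \<in> ?V" "u \<noteq> x" "superstar_out k l m u = {x}"
      using superstar_forced_predecessor[OF assms(2-4) x_P] .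
    then show ?thesis using x_P P_sub_V by (intro extinction_prob_singleton_ge) auto
  qed
  have card_V: "real (card ?V) = ?N" by (simp add: card_superstar_V algebra_simps)
  have "card ?P = l * k + 1" by (simp add: card_superstar_paths)
  then have "(real l * real k + 1) / (1 + r) = (\<Sum>x\<in>?P. 1 / (1 + r))" by simp
  also have "\<dots> \<le> (\<Sum>x\<in>?P. ?ep x)" using ep_P by (rule sum_mono)
  also have "\<dots> \<le> (\<Sum>x\<in>?V. ?ep x)"
    using P_sub_V by (intro sum_mono2 finite_V extinction_prob_nonneg)
  finally have sum_ge: "(real l * real k + 1) / (1 + r) \<le> (\<Sum>x\<in>?V. ?ep x)" .
  have "real k / (2 * r * (real m + real k)) \<le> (real l * real k + 1) / (1 + r) / ?N"
    using superstar_bound_arith[OF assms(1,2), where l = l and m = m] by (simp add: divide_divide_eq_left)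
  also have "\<dots> \<le> (\<Sum>x\<in>?V. ?ep x) / ?N"
    using sum_ge by (rule divide_right_mono) simp
  finally show ?thesis by (simp only: card_V)
qed

end
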